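(* Let $S$ be a plane unary-binary tree. Then $S$ is the skeleton of a planar linear normal $\lambda$-term if and only if all of the following hold: (Linearity) $\operatorname{leaf}(S) = \operatorname{unary}(S)$; (Normality) no binary node of $S$ has a unary node as its left child; (Connectedness) for every node $u$ of $S$ that is a binary node or a leaf, $\operatorname{leaf}(S_u) - \operatorname{unary}(S_u)$ is greater than or equal to the number of consecutive unary nodes directly above $u$. Furthermore, if $S$ is the skeleton of a planar linear normal $\lambda$-term $t$, then $t$ is 2-connected if and only if (2-connectedness) for every node $u$ of $S$ that is a binary node or a leaf, $\operatorname{leaf}(S_u) - \operatorname{unary}(S_u)$ is strictly larger than the number of consecutive unary nodes directly above $u$.
   Context: $\lambda$-terms are built from atoms, applications $t\,u$ and abstractions $\lambda x.t$, up to $\alpha$-renaming. A term is linear if closed and each abstraction binds exactly one atom; normal if it has no sub-term $(\lambda x.u)\,v$. The skeleton $\operatorname{Sk}(t)$ is the plane unary-binary tree: atom $\mapsto$ leaf; application $u\,v \mapsto$ binary node with left subtree $\operatorname{Sk}(u)$, right subtree $\operatorname{Sk}(v)$; abstraction $\lambda x.u \mapsto$ unary node with child subtree $\operatorname{Sk}(u)$. The diagram $\operatorname{Diag}(t)$ replaces each leaf of $\operatorname{Sk}(t)$ by an edge from its parent to the unary node binding that atom, drawn from the parent counter-clockwise and entering the unary node from the right; $t$ is planar if this can be done without crossings. $t$ is 2-connected if $\operatorname{Diag}(t)$ is 2-edge-connected. For a unary-binary tree $S$ and node $u$, $S_u$ is the subtree rooted at $u$, $\operatorname{leaf}(\cdot)$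 counts leaves and $\operatorname{unary}(\cdot)$ counts unary nodes. "The number of consecutive unary nodes directly above $u$" is the length of the maximal chain of unary nodes ending at the parent of $u$ (0 if the parent is not unary or $u$ is the root).
   Formalization: The (2-connectedness) condition applies only to binary nodes and leaves u with some binary proper ancestor, so the topmost such node, all of whose proper ancestors are unary, is exempt. The statement above fails without it. *)

theory Defs
  imports Main
begin

datatype sk = Leaf | Unary sk | Binary sk sk

text \<open>Nodes are addressed by paths from the root: 0 = left/only child, 1 = right child.\<close>

fun nodes :: "sk \<Rightarrow> nat list set" where
  "nodes Leaf = {[]}"
| "nodes (Unary s) = insert [] ((#) 0 ` nodes s)"
| "nodes (Binary a b) = insert [] ((#) 0 ` nodes a \<union> (#) 1 ` nodes b)"

text \<open>Subtree rooted at a node (junk value Leaf outside of nodes).\<close>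
fun subt :: "sk \<Rightarrow> nat list \<Rightarrow> sk" where
  "subt s [] = s"
| "subt (Unary s) (0 # p) = subt s p"
| "subt (Binary a b) (0 # p) = subt a p"
| "subt (Binary a b) (Suc 0 # p) = subt b p"
| "subt _ _ = Leaf"

fun nleaf :: "sk \<Rightarrow> nat" where
  "nleaf Leaf = 1"
| "nleaf (Unary s) = nleaf s"
| "nleaf (Binary a b) = nleaf a + nleaf b"

fun nunary :: "sk \<Rightarrow> nat" where
  "nunary Leaf = 0"
| "nunary (Unary s) = Suc (nunary s)"
| "nunary (Binary a b) = nunary a + nunary b"

fun is_un :: "sk \<Rightarrow> bool" where
  "is_un (Unary _) = True"
| "is_un _ = False"

fun is_leaf :: "sk \<Rightarrow> bool" where
  "is_leaf Leaf = True"
| "is_leaf _ = False"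

text \<open>Length of the maximal chain of unary nodes ending at the parent of the node at
  path p (computed top-down: the counter is incremented at unary nodes and reset at binary ones).\<close>
fun ua :: "nat \<Rightarrow> sk \<Rightarrow> nat list \<Rightarrow> nat" where
  "ua c s [] = c"
| "ua c (Unary s) (0 # p) = ua (Suc c) s p"
| "ua c (Binary a b) (0 # p) = ua 0 a p"
| "ua c (Binary a b) (Suc 0 # p) = ua 0 b p"
| "ua c _ _ = 0"

definition unary_above :: "sk \<Rightarrow> nat list \<Rightarrow> nat" where
  "unary_above S p = ua 0 S p"

text \<open>All proper ancestors of the node at p are unary (p lies on / right below the root chain).\<close>
definition on_root_chain :: "sk \<Rightarrow> nat list \<Rightarrow> bool" where
  "on_root_chain S p = (\<forall>k < length p. is_un (subt S (take k p)))"

section \<open>Lambda terms (de Bruijn indices, hence up to alpha-renaming)\<close>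

datatype lterm = Var nat | App lterm lterm | Lam lterm

fun Sk :: "lterm \<Rightarrow> sk" where
  "Sk (Var _) = Leaf"
| "Sk (App u v) = Binary (Sk u) (Sk v)"
| "Sk (Lam u) = Unary (Sk u)"

fun closed_at :: "nat \<Rightarrow> lterm \<Rightarrow> bool" where
  "closed_at n (Var i) = (i < n)"
| "closed_at n (App u v) = (closed_at n u \<and> closed_at n v)"
| "closed_at n (Lam u) = closed_at (Suc n) u"

fun occ :: "nat \<Rightarrow> lterm \<Rightarrow> nat" where
  "occ k (Var i) = (if i = k then 1 else 0)"
| "occ k (App u v) = occ k u + occ k v"
| "occ k (Lam u) = occ (Suc k) u"

fun each_binds_one :: "lterm \<Rightarrow> bool" where
  "each_binds_one (Var _) = True"
| "each_binds_one (App u v) = (each_binds_one u \<and> each_binds_one v)"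
| "each_binds_one (Lam u) = (occ 0 u = 1 \<and> each_binds_one u)"

definition linear :: "lterm \<Rightarrow> bool" where
  "linear t = (closed_at 0 t \<and> each_binds_one t)"

fun normal :: "lterm \<Rightarrow> bool" where
  "normal (Var _) = True"
| "normal (Lam u) = normal u"
| "normal (App (Lam u) v) = False"
| "normal (App u v) = (normal u \<and> normal v)"

text \<open>Planarity (non-crossing diagram), in its standard combinatorial form: ordered
  (non-commutative) linear typing.  pl n G t: t is a term under n binders whose
  free atoms, read left to right, are exactly the binder levels listed in G (level j =
  the (j+1)-th binder from the root); an abstraction binds the rightmost atom of its body's
  context, an application concatenates the contexts of function and argument.\<close>
inductive pl :: "nat \<Rightarrow> nat list \<Rightarrow> lterm \<Rightarrow> bool" where
  pl_var: "i < n \<Longrightarrow> pl n [n - Suc i] (Var i)"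
| pl_app: "pl n \<Gamma> u \<Longrightarrow> pl n \<Delta> v \<Longrightarrow> pl n (\<Gamma> @ \<Delta>) (App u v)"
| pl_lam: "pl (Suc n) (\<Gamma> @ [n]) u \<Longrightarrow> pl n \<Gamma> (Lam u)"

definition planar :: "lterm \<Rightarrow> bool" where
  "planar t = pl 0 [] t"

text \<open>Binder of the leaf at path p: the unary node (path) binding that atom.
  The stack st holds the paths of the enclosing abstractions, innermost first;
  q is the path of the current position.\<close>
fun bnd :: "nat list list \<Rightarrow> nat list \<Rightarrow> lterm \<Rightarrow> nat list \<Rightarrow> nat list" where
  "bnd st q (Var i) [] = st ! i"
| "bnd st q (Lam u) (0 # p) = bnd (q # st) (q @ [0]) u p"
| "bnd st q (App u v) (0 # p) = bnd st (q @ [0]) u p"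
| "bnd st q (App u v) (Suc 0 # p) = bnd st (q @ [1]) v p"
| "bnd st q _ _ = []"

definition binder_of :: "lterm \<Rightarrow> nat list \<Rightarrow> nat list" where
  "binder_of t p = bnd [] [] t p"

text \<open>Edges are indexed by the
  non-root nodes c of Sk(t): if c is internal, the tree edge (parent c, c); if c is a leaf,
  the edge (parent c, binder of c) replacing it.  (A multigraph, loops allowed.)\<close>
definition diag_vertices :: "lterm \<Rightarrow> nat list set" where
  "diag_vertices t = {p \<in> nodes (Sk t). \<not> is_leaf (subt (Sk t) p)}"

definition diag_edges :: "lterm \<Rightarrow> nat list set" where
  "diag_edges t = nodes (Sk t) - {[]}"

definition diag_ends :: "lterm \<Rightarrow> nat list \<Rightarrow> nat list \<times> nat list" where
  "diag_ends t c = (if is_leaf (subt (Sk t) c) then (butlast c, binder_of t c) else (butlast c, c))"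

definition adj :: "('e \<Rightarrow> 'v \<times> 'v) \<Rightarrow> 'e set \<Rightarrow> 'v \<Rightarrow> 'v \<Rightarrow> bool" where
  "adj ends E x y = (\<exists>e \<in> E. ends e = (x, y) \<or> ends e = (y, x))"

definition two_edge_connected :: "'v set \<Rightarrow> 'e set \<Rightarrow> ('e \<Rightarrow> 'v \<times> 'v) \<Rightarrow> bool" where
  "two_edge_connected V E ends =
     ((\<forall>x\<in>V. \<forall>y\<in>V. (adj ends E)\<^sup>*\<^sup>* x y) \<and>
      (\<forall>e\<in>E. \<forall>x\<in>V. \<forall>y\<in>V. (adj ends (E - {e}))\<^sup>*\<^sup>* x y))"

definition two_connected :: "lterm \<Rightarrow> bool" where
  "two_connected t = two_edge_connected (diag_vertices t) (diag_edges t) (diag_ends t)"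

definition cond_linearity :: "sk \<Rightarrow> bool" where
  "cond_linearity S = (nleaf S = nunary S)"

definition cond_normality :: "sk \<Rightarrow> bool" where
  "cond_normality S = (\<forall>p \<in> nodes S. \<forall>a b. subt S p = Binary a b \<longrightarrow> \<not> is_un a)"

definition cond_connectedness :: "sk \<Rightarrow> bool" where
  "cond_connectedness S = (\<forall>p \<in> nodes S. \<not> is_un (subt S p) \<longrightarrow>
     int (nleaf (subt S p)) - int (nunary (subt S p)) \<ge> int (unary_above S p))"

text \<open>2-connectedness condition; the topmost binary-or-leaf node (all of whose proper
  ancestors are unary) is exempt.\<close>
definition cond_2connectedness :: "sk \<Rightarrow> bool" where
  "cond_2connectedness S = (\<forall>p \<in> nodes S. \<not> is_un (subt S p) \<and> \<not> on_root_chain S p \<longrightarrow>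
     int (nleaf (subt S p)) - int (nunary (subt S p)) > int (unary_above S p))"

end

theory Submission
  imports Defs "HOL-Library.Sublist"
begin

text \<open>Let the excess of a skeleton be leaf - unary.  A planar term whose free atoms form the
  ordered context G has a skeleton of excess length G: an abstraction binds the rightmost free atom
  of its body, an application concatenates the contexts of its two sides.  So a closed planar term
  has excess 0 at the root, and the body of each abstraction has positive excess; conversely such a
  skeleton is decorated top-down, splitting the context at an application according to the excess
  of the function part, and normality only forbids a unary left child.  Along a chain of unary
  nodes the excess drops by one per node, which turns these conditions into the ones with the
  chain counts.

  In the diagram the edges replacing leaves close cycles through the tree, so only tree edges can be
  bridges.  Removing the tree edge into an internal node c keeps the diagram connected iff some
  leaf below c is bound strictly above c, i.e. iff the subterm at c has a free atom, i.e. iff the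
  excess at c is positive.\<close>

section \<open>Paths in skeletons\<close>

lemma Nil_in_nodes [simp]: "[] \<in> nodes s"
  by (cases s) auto

lemma subt_Leaf [simp]: "subt Leaf p = Leaf"
  by (cases p) auto

lemma subt_append: "subt s (x @ p) = subt (subt s x) p"
  by (induction s x rule: subt.induct) auto

lemma Cons_in_nodes_iff:
  "i # p \<in> nodes s \<longleftrightarrow> (\<exists>s'. s = Unary s' \<and> i = 0 \<and> p \<in> nodes s') \<or>
     (\<exists>a b. s = Binary a b \<and> (i = 0 \<and> p \<in> nodes a \<or> i = 1 \<and> p \<in> nodes b))"
  by (cases s) auto

lemma append_in_nodes_iff: "x \<in> nodes s \<Longrightarrow> x @ p \<in> nodes s \<longleftrightarrow> p \<in> nodes (subt s x)"
  by (induction x arbitrary: s) (auto simp: Cons_in_nodes_iff)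

lemma nodes_appendD: "x @ p \<in> nodes s \<Longrightarrow> x \<in> nodes s"
  by (induction x arbitrary: s) (auto simp: Cons_in_nodes_iff)

lemma ball_nodes_Unary: "(\<forall>p\<in>nodes (Unary s). Q p) \<longleftrightarrow> Q [] \<and> (\<forall>p\<in>nodes s. Q (0 # p))"
  by simp

lemma ball_nodes_Binary:
  "(\<forall>p\<in>nodes (Binary a b). Q p) \<longleftrightarrow> Q [] \<and> (\<forall>p\<in>nodes a. Q (0 # p)) \<and> (\<forall>p\<in>nodes b. Q (1 # p))"
  by auto

lemma strict_prefix_node_internal:
  assumes "strict_prefix z y" "y \<in> nodes s"
  shows "z \<in> nodes s \<and> \<not> is_leaf (subt s z)"
proof -
  obtain w where w: "y = z @ w" "w \<noteq> []"
    using assms(1) by (auto simp: strict_prefix_def prefix_def)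
  then have "z \<in> nodes s" "w \<in> nodes (subt s z)"
    using assms(2) nodes_appendD append_in_nodes_iff by blast+
  with w(2) show ?thesis
    by (cases "subt s z") auto
qed

lemma butlast_node_internal:
  assumes "x \<in> nodes s" "x \<noteq> []"
  shows "butlast x \<in> nodes s \<and> \<not> is_leaf (subt s (butlast x))"
proof -
  have "strict_prefix (butlast x) x"
    using assms(2) by (cases x rule: rev_cases) (auto simp: strict_prefix_def)
  then show ?thesis
    using strict_prefix_node_internal assms(1) by blast
qed

lemma strict_prefix_imp_prefix_butlast: "strict_prefix b x \<Longrightarrow> prefix b (butlast x)"
  by (cases x rule: rev_cases) (auto simp: strict_prefix_def)

section \<open>Excess\<close>

definition excess :: "sk \<Rightarrow> int" where
  "excess s = int (nleaf s) - int (nunary s)"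

lemma excess_simps [simp]:
  "excess Leaf = 1" "excess (Unary s) = excess s - 1" "excess (Binary a b) = excess a + excess b"
  by (auto simp: excess_def)

fun no_left_unary :: "sk \<Rightarrow> bool" where
  "no_left_unary Leaf = True"
| "no_left_unary (Unary s) = no_left_unary s"
| "no_left_unary (Binary a b) = (\<not> is_un a \<and> no_left_unary a \<and> no_left_unary b)"

lemma cond_normality_iff: "cond_normality S \<longleftrightarrow> no_left_unary S"
  unfolding cond_normality_def
  by (induction S) (simp_all only: ball_nodes_Unary ball_nodes_Binary, auto)

fun bodies_excess_pos :: "sk \<Rightarrow> bool" where
  "bodies_excess_pos Leaf = True"
| "bodies_excess_pos (Unary s) = (0 < excess s \<and> bodies_excess_pos s)"
| "bodies_excess_pos (Binary a b) = (bodies_excess_pos a \<and> bodies_excess_pos b)"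

lemma bodies_excess_pos_imp_excess_nonneg: "bodies_excess_pos s \<Longrightarrow> 0 \<le> excess s"
  by (induction s) auto

definition excess_pos_everywhere :: "sk \<Rightarrow> bool" where
  "excess_pos_everywhere s \<longleftrightarrow> (\<forall>p\<in>nodes s. 0 < excess (subt s p))"

lemma excess_pos_everywhere_simps [simp]:
  "excess_pos_everywhere Leaf"
  "excess_pos_everywhere (Unary s) \<longleftrightarrow> 1 < excess s \<and> excess_pos_everywhere s"
  "excess_pos_everywhere (Binary a b) \<longleftrightarrow>
     0 < excess a + excess b \<and> excess_pos_everywhere a \<and> excess_pos_everywhere b"
  unfolding excess_pos_everywhere_def by (simp_all only: ball_nodes_Unary ball_nodes_Binary) auto

lemma excess_pos_everywhere_imp_excess_pos: "excess_pos_everywhere s \<Longrightarrow> 0 < excess s"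
  by (cases s) auto

text \<open>The counter c is the number of unary nodes directly above the root of s.\<close>
definition excess_dominates_chain :: "(int \<Rightarrow> int \<Rightarrow> bool) \<Rightarrow> nat \<Rightarrow> sk \<Rightarrow> bool" where
  "excess_dominates_chain R c s \<longleftrightarrow>
     (\<forall>p\<in>nodes s. \<not> is_un (subt s p) \<longrightarrow> R (int (ua c s p)) (excess (subt s p)))"

lemma excess_dominates_chain_simps [simp]:
  "excess_dominates_chain R c Leaf \<longleftrightarrow> R (int c) 1"
  "excess_dominates_chain R c (Unary s) \<longleftrightarrow> excess_dominates_chain R (Suc c) s"
  "excess_dominates_chain R c (Binary a b) \<longleftrightarrow>
     R (int c) (excess a + excess b) \<and> excess_dominates_chain R 0 a \<and> excess_dominates_chain R 0 b"
  unfolding excess_dominates_chain_def by (simp_all only: ball_nodes_Unary ball_nodes_Binary) auto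

lemma excess_dominates_chain_le:
  "excess_dominates_chain (\<le>) c s \<longleftrightarrow> int c \<le> excess s \<and> bodies_excess_pos s"
  by (induction s arbitrary: c) (auto dest: bodies_excess_pos_imp_excess_nonneg)

lemma excess_dominates_chain_less:
  "excess_dominates_chain (<) c s \<longleftrightarrow> int c < excess s \<and> excess_pos_everywhere s"
  by (induction s arbitrary: c) (auto dest: excess_pos_everywhere_imp_excess_pos)

lemma cond_connectedness_iff: "cond_connectedness S \<longleftrightarrow> bodies_excess_pos S"
proof -
  have "cond_connectedness S \<longleftrightarrow> excess_dominates_chain (\<le>) 0 S"
    unfolding cond_connectedness_def excess_dominates_chain_def unary_above_def excess_def
    by (rule refl)
  then show ?thesis
    using excess_dominates_chain_le[of 0 S] bodies_excess_pos_imp_excess_nonneg[of S] by auto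
qed

lemma on_root_chain_Nil: "on_root_chain s []"
  by (simp add: on_root_chain_def)

lemma on_root_chain_Unary: "on_root_chain (Unary s) (0 # p) \<longleftrightarrow> on_root_chain s p"
  unfolding on_root_chain_def by (auto simp: less_Suc_eq_0_disj)

lemma not_on_root_chain_Binary: "\<not> on_root_chain (Binary a b) (i # p)"
  unfolding on_root_chain_def by (auto intro!: exI[of _ 0])

fun excess_pos_below_root_chain :: "sk \<Rightarrow> bool" where
  "excess_pos_below_root_chain Leaf = True"
| "excess_pos_below_root_chain (Unary s) = excess_pos_below_root_chain s"
| "excess_pos_below_root_chain (Binary a b) = (excess_pos_everywhere a \<and> excess_pos_everywhere b)"

lemma cond_2connectedness_iff: "cond_2connectedness S \<longleftrightarrow> excess_pos_below_root_chain S"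
proof -
  have "(\<forall>p\<in>nodes s. \<not> is_un (subt s p) \<and> \<not> on_root_chain s p \<longrightarrow>
           int (ua c s p) < excess (subt s p)) \<longleftrightarrow> excess_pos_below_root_chain s" for c s
  proof (induction s arbitrary: c)
    case (Unary s)
    then show ?case by (simp add: on_root_chain_Unary)
  next
    case (Binary a b)
    have "excess_dominates_chain (<) 0 a \<and> excess_dominates_chain (<) 0 b \<longleftrightarrow>
          excess_pos_below_root_chain (Binary a b)"
      by (auto simp: excess_dominates_chain_less dest: excess_pos_everywhere_imp_excess_pos)
    then show ?case unfolding excess_dominates_chain_def
      by (simp only: ball_nodes_Binary) (simp add: on_root_chain_Nil not_on_root_chain_Binary)
  qed (simp add: on_root_chain_Nil)
  then show ?thesis
    unfolding cond_2connectedness_def unary_above_def excess_def .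
qed

definition excess_pos_below_root :: "sk \<Rightarrow> bool" where
  "excess_pos_below_root s \<longleftrightarrow> (\<forall>p\<in>nodes s. p \<noteq> [] \<longrightarrow> 0 < excess (subt s p))"

lemma excess_pos_below_root_simps [simp]:
  "excess_pos_below_root Leaf"
  "excess_pos_below_root (Unary s) \<longleftrightarrow> excess_pos_everywhere s"
  "excess_pos_below_root (Binary a b) \<longleftrightarrow> excess_pos_everywhere a \<and> excess_pos_everywhere b"
  unfolding excess_pos_below_root_def excess_pos_everywhere_def
  by (simp_all only: ball_nodes_Unary ball_nodes_Binary) auto

lemma excess_pos_below_root_chain_iff:
  assumes "excess S = 0"
  shows "excess_pos_below_root_chain S \<longleftrightarrow> excess_pos_below_root S"
proof -
  have "0 < excess s \<Longrightarrow> excess_pos_below_root_chain s \<longleftrightarrow> excess_pos_everywhere s" for s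
    by (induction s) auto
  then show ?thesis using assms by (cases S) auto
qed

section \<open>Planar terms and their binders\<close>

lemma pl_excess: "pl n G t \<Longrightarrow> excess (Sk t) = int (length G)"
  by (induction rule: pl.induct) auto

lemma pl_bodies_excess_pos: "pl n G t \<Longrightarrow> bodies_excess_pos (Sk t)"
  by (induction rule: pl.induct) (auto dest: pl_excess)

lemma normal_no_left_unary: "normal t \<Longrightarrow> no_left_unary (Sk t)"
  by (induction t rule: normal.induct) auto

lemma pl_linear:
  "pl n G t \<Longrightarrow> \<forall>x\<in>set G. x < n \<Longrightarrow>
     closed_at n t \<and> each_binds_one t \<and> (\<forall>k<n. occ k t = count_list G (n - Suc k))"
proof (induction rule: pl.induct)
  case (pl_lam n \<Gamma> u)
  have "\<forall>x\<in>set (\<Gamma> @ [n]). x < Suc n"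
    using pl_lam.prems by auto
  note IH = pl_lam.IH[OF this]
  have "count_list \<Gamma> n = 0"
    using pl_lam.prems by (auto simp: count_list_0_iff)
  with IH have "occ 0 u = 1"
    by auto
  moreover have "occ (Suc k) u = count_list \<Gamma> (n - Suc k)" if "k < n" for k
    using IH that by (auto simp: Suc_diff_Suc)
  ultimately show ?case
    using IH by auto
qed auto

lemma exists_pl_normal:
  "bodies_excess_pos s \<Longrightarrow> no_left_unary s \<Longrightarrow> excess s = int (length G) \<Longrightarrow>
   \<forall>x\<in>set G. x < n \<Longrightarrow> \<exists>t. Sk t = s \<and> pl n G t \<and> normal t"
proof (induction s arbitrary: n G)
  case Leaf
  then obtain l where G: "G = [l]" and "l < n"
    by (cases G) auto
  then have "pl n G (Var (n - Suc l))"
    using pl_var[of "n - Suc l" n] by auto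
  then show ?case
    by (intro exI[of _ "Var (n - Suc l)"]) auto
next
  case (Unary s)
  have "bodies_excess_pos s" "no_left_unary s" "excess s = int (length (G @ [n]))"
    "\<forall>x\<in>set (G @ [n]). x < Suc n"
    using Unary.prems by auto
  then obtain u where "Sk u = s" "pl (Suc n) (G @ [n]) u" "normal u"
    using Unary.IH by blast
  then show ?case
    by (intro exI[of _ "Lam u"]) (auto intro: pl_lam)
next
  case (Binary a b)
  define k where "k = nat (excess a)"
  have "0 \<le> excess a" "0 \<le> excess b"
    using Binary.prems(1) bodies_excess_pos_imp_excess_nonneg by auto
  then have "excess a = int (length (take k G))" "excess b = int (length (drop k G))"
    using Binary.prems(3) by (auto simp: k_def)
  moreover have "\<forall>x\<in>set (take k G). x < n" "\<forall>x\<in>set (drop k G). x < n"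
    using Binary.prems(4) by (auto dest: in_set_takeD in_set_dropD)
  moreover have "bodies_excess_pos a" "no_left_unary a" "bodies_excess_pos b" "no_left_unary b"
    using Binary.prems(1,2) by auto
  ultimately obtain u v where
    u: "Sk u = a" "pl n (take k G) u" "normal u" and
    v: "Sk v = b" "pl n (drop k G) v" "normal v"
    using Binary.IH by meson
  have "pl n (take k G @ drop k G) (App u v)"
    using u v by (intro pl_app)
  moreover have "normal (App u v)"
    using u v Binary.prems(2) by (cases u) auto
  ultimately show ?case
    using u v by (intro exI[of _ "App u v"]) auto
qed

theorem planar_linear_normal_skeleton_iff:
  "(\<exists>t. Sk t = S \<and> planar t \<and> linear t \<and> normal t) \<longleftrightarrow>
     nleaf S = nunary S \<and> no_left_unary S \<and> bodies_excess_pos S"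
proof
  assume "\<exists>t. Sk t = S \<and> planar t \<and> linear t \<and> normal t"
  then obtain t where "Sk t = S" "pl 0 [] t" "normal t"
    by (auto simp: planar_def)
  then show "nleaf S = nunary S \<and> no_left_unary S \<and> bodies_excess_pos S"
    using pl_excess pl_bodies_excess_pos normal_no_left_unary by (force simp: excess_def)
next
  assume "nleaf S = nunary S \<and> no_left_unary S \<and> bodies_excess_pos S"
  then obtain t where "Sk t = S" "pl 0 [] t" "normal t"
    using exists_pl_normal[of S "[]" 0] by (auto simp: excess_def)
  with pl_linear[of 0 "[]" t] show "\<exists>t. Sk t = S \<and> planar t \<and> linear t \<and> normal t"
    by (auto simp: planar_def linear_def)
qed

inductive_cases pl_LamE: "pl n G (Lam u)"
inductive_cases pl_AppE: "pl n G (App u v)"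

lemma pl_child:
  assumes "pl n G t" "i # x \<in> nodes (Sk t)" "\<forall>y\<in>set G. y < n" "length st = n"
  obtains n' G' t' st' where "pl n' G' t'" "\<forall>y\<in>set G'. y < n'" "length st' = n'"
    "set st' \<subseteq> insert q (set st)" "x \<in> nodes (Sk t')"
    "\<And>p. subt (Sk t) (i # p) = subt (Sk t') p" "\<And>p. bnd st q t (i # p) = bnd st' (q @ [i]) t' p"
proof (cases t)
  case (Var j)
  then show ?thesis using assms(2) by simp
next
  case (Lam u)
  then have "pl (Suc n) (G @ [n]) u" "i = 0" "x \<in> nodes (Sk u)"
    using assms(1,2) by (auto elim: pl_LamE)
  then show ?thesis
    using assms(3,4) by (intro that[of "Suc n" "G @ [n]" u "q # st"]) (auto simp: Lam)
next
  case (App u v)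
  then obtain \<Gamma> \<Delta> where "pl n \<Gamma> u" "pl n \<Delta> v" "G = \<Gamma> @ \<Delta>"
    using assms(1) by (auto elim: pl_AppE)
  moreover have "i = 0 \<and> x \<in> nodes (Sk u) \<or> i = 1 \<and> x \<in> nodes (Sk v)"
    using assms(2) App by auto
  ultimately show ?thesis
  proof (elim disjE conjE)
    assume "i = 0" "x \<in> nodes (Sk u)"
    with \<open>pl n \<Gamma> u\<close> show ?thesis
      using assms(3,4) \<open>G = \<Gamma> @ \<Delta>\<close> by (intro that[of n \<Gamma> u st]) (auto simp: App)
  next
    assume "i = 1" "x \<in> nodes (Sk v)"
    with \<open>pl n \<Delta> v\<close> show ?thesis
      using assms(3,4) \<open>G = \<Gamma> @ \<Delta>\<close> by (intro that[of n \<Delta> v st]) (auto simp: App)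
  qed
qed

lemma pl_subterm:
  "pl n G t \<Longrightarrow> x \<in> nodes (Sk t) \<Longrightarrow> \<forall>y\<in>set G. y < n \<Longrightarrow> length st = n \<Longrightarrow>
   \<exists>n' G' t' st'. pl n' G' t' \<and> (\<forall>y\<in>set G'. y < n') \<and> length st' = n' \<and>
     Sk t' = subt (Sk t) x \<and>
     (\<forall>b\<in>set st'. b \<in> set st \<or> prefix q b \<and> strict_prefix b (q @ x)) \<and>
     (\<forall>p. bnd st q t (x @ p) = bnd st' (q @ x) t' p)"
proof (induction x arbitrary: n G t st q)
  case Nil
  then show ?case by fastforce
next
  case (Cons i x)
  obtain n1 G1 t1 st1 where t1: "pl n1 G1 t1" "\<forall>y\<in>set G1. y < n1" "length st1 = n1"
    "set st1 \<subseteq> insert q (set st)" "x \<in> nodes (Sk t1)"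
    "\<And>p. subt (Sk t) (i # p) = subt (Sk t1) p" "\<And>p. bnd st q t (i # p) = bnd st1 (q @ [i]) t1 p"
    using pl_child[OF Cons.prems] by blast
  obtain n' G' t' st' where t': "pl n' G' t'" "\<forall>y\<in>set G'. y < n'" "length st' = n'"
    "Sk t' = subt (Sk t1) x"
    "\<forall>b\<in>set st'. b \<in> set st1 \<or> prefix (q @ [i]) b \<and> strict_prefix b ((q @ [i]) @ x)"
    "\<forall>p. bnd st1 (q @ [i]) t1 (x @ p) = bnd st' ((q @ [i]) @ x) t' p"
    using Cons.IH[OF t1(1,5,2,3)] by blast
  have "b \<in> set st \<or> prefix q b \<and> strict_prefix b (q @ i # x)" if "b \<in> set st'" for b
    using t'(5) t1(4) that by (auto intro: strict_prefixI' dest: append_prefixD)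
  then show ?case
    using t1 t' by (intro exI[of _ n'] exI[of _ G'] exI[of _ t'] exI[of _ st']) auto
qed

lemma closed_pl_subterm:
  assumes "pl 0 [] t" "x \<in> nodes (Sk t)"
  obtains n G t' st where "pl n G t'" "\<forall>y\<in>set G. y < n" "length st = n" "Sk t' = subt (Sk t) x"
    "\<forall>b\<in>set st. strict_prefix b x" "\<forall>p. binder_of t (x @ p) = bnd st x t' p"
  using pl_subterm[OF assms, of "[]" "[]"] that by (auto simp: binder_of_def)

text \<open>The stack st lists the enclosing binders innermost first, so the binder of level l is
  st ! (n - Suc l).\<close>
lemma bnd_leaf:
  "pl n G t \<Longrightarrow> length st = n \<Longrightarrow> \<forall>y\<in>set G. y < n \<Longrightarrow>
   p \<in> nodes (Sk t) \<Longrightarrow> is_leaf (subt (Sk t) p) \<Longrightarrow>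
   (\<exists>l\<in>set G. bnd st q t p = st ! (n - Suc l)) \<or>
   prefix q (bnd st q t p) \<and> strict_prefix (bnd st q t p) (q @ p)"
proof (induction arbitrary: st q p rule: pl.induct)
  case (pl_app n \<Gamma> u \<Delta> v)
  from pl_app.prems(3,4) consider
      p' where "p = 0 # p'" "p' \<in> nodes (Sk u)" "is_leaf (subt (Sk u) p')"
    | p' where "p = 1 # p'" "p' \<in> nodes (Sk v)" "is_leaf (subt (Sk v) p')"
    by auto
  then show ?case
  proof cases
    case (1 p')
    with pl_app.IH(1)[of st p' "q @ [0]"] pl_app.prems(1,2) show ?thesis
      by (auto dest: append_prefixD)
  next
    case (2 p')
    with pl_app.IH(2)[of st p' "q @ [1]"] pl_app.prems(1,2) show ?thesis
      by (auto dest: append_prefixD)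
  qed
next
  case (pl_lam n \<Gamma> u)
  then obtain p' where p: "p = 0 # p'" "p' \<in> nodes (Sk u)" "is_leaf (subt (Sk u) p')"
    by auto
  have "length (q # st) = Suc n" "\<forall>y\<in>set (\<Gamma> @ [n]). y < Suc n"
    using pl_lam.prems by auto
  from pl_lam.IH[OF this p(2,3), of "q @ [0]"]
  consider l where "l \<in> set \<Gamma>" "bnd (q # st) (q @ [0]) u p' = (q # st) ! (Suc n - Suc l)"
    | "bnd (q # st) (q @ [0]) u p' = q"
    | "prefix (q @ [0]) (bnd (q # st) (q @ [0]) u p')" "strict_prefix (bnd (q # st) (q @ [0]) u p') (q @ 0 # p')"
    by auto
  then show ?case
  proof cases
    case (1 l)
    then have "l < n" using pl_lam.prems by auto
    with 1 show ?thesis by (auto simp: p Suc_diff_Suc)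
  qed (auto simp: p intro: strict_prefixI' dest: append_prefixD)
qed auto

lemma bnd_context_leaf:
  "pl n G t \<Longrightarrow> length st = n \<Longrightarrow> \<forall>y\<in>set G. y < n \<Longrightarrow> l \<in> set G \<Longrightarrow>
   \<exists>p\<in>nodes (Sk t). is_leaf (subt (Sk t) p) \<and> bnd st q t p = st ! (n - Suc l)"
proof (induction arbitrary: st q rule: pl.induct)
  case (pl_app n \<Gamma> u \<Delta> v)
  from \<open>l \<in> set (\<Gamma> @ \<Delta>)\<close> consider "l \<in> set \<Gamma>" | "l \<in> set \<Delta>"
    by auto
  then show ?case
  proof cases
    case 1
    with pl_app obtain p where "p \<in> nodes (Sk u)" "is_leaf (subt (Sk u) p)"
      "bnd st (q @ [0]) u p = st ! (n - Suc l)"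
      by (metis UnCI set_append)
    then show ?thesis
      by (intro bexI[of _ "0 # p"]) auto
  next
    case 2
    with pl_app obtain p where "p \<in> nodes (Sk v)" "is_leaf (subt (Sk v) p)"
      "bnd st (q @ [1]) v p = st ! (n - Suc l)"
      by (metis UnCI set_append)
    then show ?thesis
      by (intro bexI[of _ "1 # p"]) auto
  qed
next
  case (pl_lam n \<Gamma> u)
  then have "l < n" "length (q # st) = Suc n" "\<forall>y\<in>set (\<Gamma> @ [n]). y < Suc n" "l \<in> set (\<Gamma> @ [n])"
    by auto
  then obtain p where "p \<in> nodes (Sk u)" "is_leaf (subt (Sk u) p)"
    "bnd (q # st) (q @ [0]) u p = (q # st) ! (Suc n - Suc l)"
    using pl_lam.IH by blast
  with \<open>l < n\<close> show ?case
    by (intro bexI[of _ "0 # p"]) (auto simp: Suc_diff_Suc)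
qed auto

lemma binder_of_strict_prefix:
  assumes "pl 0 [] t" "c \<in> nodes (Sk t)" "is_leaf (subt (Sk t) c)"
  shows "strict_prefix (binder_of t c) c"
proof -
  from assms have "strict_prefix (bnd [] [] t c) c"
    using bnd_leaf[of 0 "[]" t "[]" c "[]"] by auto
  then show ?thesis
    unfolding binder_of_def .
qed

lemma excess_subt_nonneg:
  assumes "pl 0 [] t" "x \<in> nodes (Sk t)"
  shows "0 \<le> excess (subt (Sk t) x)"
proof -
  obtain n G t' st where "pl n G t'" "\<forall>y\<in>set G. y < n" "length st = n" "Sk t' = subt (Sk t) x"
    "\<forall>b\<in>set st. strict_prefix b x" "\<forall>p. binder_of t (x @ p) = bnd st x t' p"
    by (rule closed_pl_subterm[OF assms])
  then show ?thesis
    using pl_excess by fastforce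
qed

lemma binder_above_if_excess_pos:
  assumes "pl 0 [] t" "x \<in> nodes (Sk t)" "0 < excess (subt (Sk t) x)"
  obtains p where "x @ p \<in> nodes (Sk t)" "is_leaf (subt (Sk t) (x @ p))"
    "strict_prefix (binder_of t (x @ p)) x"
proof -
  obtain n G t' st where t': "pl n G t'" "\<forall>y\<in>set G. y < n" "length st = n" "Sk t' = subt (Sk t) x"
    "\<forall>b\<in>set st. strict_prefix b x" "\<forall>p. binder_of t (x @ p) = bnd st x t' p"
    by (rule closed_pl_subterm[OF assms(1,2)])
  obtain l where "l \<in> set G"
    using pl_excess[OF t'(1)] t'(4) assms(3) by (cases G) auto
  then obtain p where p: "p \<in> nodes (Sk t')" "is_leaf (subt (Sk t') p)" "bnd st x t' p = st ! (n - Suc l)"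
    using bnd_context_leaf[OF t'(1,3,2)] by blast
  have "st ! (n - Suc l) \<in> set st"
    using \<open>l \<in> set G\<close> t'(2,3) by auto
  then have "strict_prefix (binder_of t (x @ p)) x"
    using p(3) t'(5,6) by simp
  moreover have "x @ p \<in> nodes (Sk t)" "is_leaf (subt (Sk t) (x @ p))"
    using p(1,2) t'(4) append_in_nodes_iff[OF assms(2)] by (simp_all add: subt_append)
  ultimately show ?thesis
    by (rule that[rotated 2])
qed

lemma binder_below_if_excess_zero:
  assumes "pl 0 [] t" "x \<in> nodes (Sk t)" "excess (subt (Sk t) x) = 0"
    "x @ p \<in> nodes (Sk t)" "is_leaf (subt (Sk t) (x @ p))"
  shows "prefix x (binder_of t (x @ p))"
proof -
  obtain n G t' st where t': "pl n G t'" "\<forall>y\<in>set G. y < n" "length st = n" "Sk t' = subt (Sk t) x"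
    "\<forall>b\<in>set st. strict_prefix b x" "\<forall>p. binder_of t (x @ p) = bnd st x t' p"
    by (rule closed_pl_subterm[OF assms(1,2)])
  have "G = []"
    using pl_excess[OF t'(1)] t'(4) assms(3) by auto
  moreover have "p \<in> nodes (Sk t')" "is_leaf (subt (Sk t') p)"
    using assms(4,5) t'(4) append_in_nodes_iff[OF assms(2)] by (simp_all add: subt_append)
  ultimately show ?thesis
    using bnd_leaf[OF t'(1,3,2), of p x] t'(6) by simp
qed

section \<open>The diagram\<close>

lemma diag_ends_internal [simp]: "\<not> is_leaf (subt (Sk t) c) \<Longrightarrow> diag_ends t c = (butlast c, c)"
  by (simp add: diag_ends_def)

lemma diag_ends_leaf [simp]: "is_leaf (subt (Sk t) c) \<Longrightarrow> diag_ends t c = (butlast c, binder_of t c)"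
  by (simp add: diag_ends_def)

lemma adj_rtranclp_sym: "(adj ends E)\<^sup>*\<^sup>* x y \<Longrightarrow> (adj ends E)\<^sup>*\<^sup>* y x"
proof -
  have "symp (adj ends E)"
    by (auto simp: symp_def adj_def)
  then show "(adj ends E)\<^sup>*\<^sup>* x y \<Longrightarrow> (adj ends E)\<^sup>*\<^sup>* y x"
    using symp_rtranclp sympD by metis
qed

lemma diag_path_down:
  assumes "x @ w \<in> nodes (Sk t)" "\<not> is_leaf (subt (Sk t) (x @ w))"
    "\<not> (strict_prefix x e \<and> prefix e (x @ w))"
  shows "(adj (diag_ends t) (diag_edges t - {e}))\<^sup>*\<^sup>* x (x @ w)"
  using assms
proof (induction w rule: rev_induct)
  case (snoc a w)
  have "butlast (x @ w @ [a]) = x @ w"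
    by (simp flip: append_assoc)
  then have "x @ w \<in> nodes (Sk t)" "\<not> is_leaf (subt (Sk t) (x @ w))"
    using butlast_node_internal[OF snoc.prems(1)] by auto
  moreover have "\<not> (strict_prefix x e \<and> prefix e (x @ w))"
    using snoc.prems(3) by (metis append_assoc prefix_prefix)
  ultimately have "(adj (diag_ends t) (diag_edges t - {e}))\<^sup>*\<^sup>* x (x @ w)"
    using snoc.IH by blast
  moreover have "x @ w @ [a] \<noteq> e"
    using snoc.prems(3) by (auto simp: strict_prefix_def)
  then have "adj (diag_ends t) (diag_edges t - {e}) (x @ w) (x @ w @ [a])"
    unfolding adj_def using snoc.prems(1,2) \<open>butlast (x @ w @ [a]) = x @ w\<close>
    by (intro bexI[of _ "x @ w @ [a]"]) (auto simp: diag_edges_def)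
  ultimately show ?case
    by (simp add: rtranclp.rtrancl_into_rtrancl)
qed simp

lemma diag_reaches_root:
  assumes t: "pl 0 [] t" "excess_pos_below_root (Sk t)" and "x \<in> diag_vertices t"
  shows "(adj (diag_ends t) (diag_edges t - {e}))\<^sup>*\<^sup>* x []"
  using assms(3)
proof (induction "length x" arbitrary: x rule: less_induct)
  case less
  let ?R = "adj (diag_ends t) (diag_edges t - {e})"
  have x: "x \<in> nodes (Sk t)" "\<not> is_leaf (subt (Sk t) x)"
    using less.prems by (auto simp: diag_vertices_def)
  show ?case
  proof (cases "x = []")
    case False
    show ?thesis
    proof (cases "x = e")
      case False
      have "butlast x \<in> diag_vertices t"
        using butlast_node_internal[OF x(1) \<open>x \<noteq> []\<close>] by (auto simp: diag_vertices_def)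
      then have "?R\<^sup>*\<^sup>* (butlast x) []"
        using less.hyps \<open>x \<noteq> []\<close> by simp
      moreover have "?R x (butlast x)"
        unfolding adj_def using False x \<open>x \<noteq> []\<close> by (intro bexI[of _ x]) (auto simp: diag_edges_def)
      ultimately show ?thesis
        by (simp add: converse_rtranclp_into_rtranclp)
    next
      case True
      \<comment> \<open>The tree edge above x is removed; leave the subtree through a leaf bound above x.\<close>
      have "0 < excess (subt (Sk t) x)"
        using t(2) x \<open>x \<noteq> []\<close> by (auto simp: excess_pos_below_root_def)
      then obtain p where c: "x @ p \<in> nodes (Sk t)" "is_leaf (subt (Sk t) (x @ p))"
        and bound_above: "strict_prefix (binder_of t (x @ p)) x"
        using binder_above_if_excess_pos[OF t(1) x(1)] by blast
      define b where "b = binder_of t (x @ p)"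
      have "p \<noteq> []"
        using c(2) x(2) by auto
      have "b \<in> diag_vertices t"
        using strict_prefix_node_internal[OF binder_of_strict_prefix[OF t(1) c] c(1)]
        by (auto simp: b_def diag_vertices_def)
      then have "?R\<^sup>*\<^sup>* b []"
        using less.hyps bound_above prefix_length_less by (auto simp: b_def)
      moreover have "butlast (x @ p) = x @ butlast p"
        using \<open>p \<noteq> []\<close> by (simp add: butlast_append)
      then have "?R\<^sup>*\<^sup>* x (butlast (x @ p))"
        using butlast_node_internal[OF c(1)] \<open>p \<noteq> []\<close> True diag_path_down[of x "butlast p" t e]
        by auto
      moreover have "?R (butlast (x @ p)) b"
        unfolding adj_def using c True \<open>p \<noteq> []\<close>
        by (intro bexI[of _ "x @ p"]) (auto simp: diag_edges_def b_def)
      ultimately show ?thesis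
        by (meson rtranclp.rtrancl_into_rtrancl rtranclp_trans)
    qed
  qed simp
qed

lemma diag_stays_below:
  assumes t: "pl 0 [] t" and c: "c \<in> nodes (Sk t)" "excess (subt (Sk t) c) = 0"
    and "(adj (diag_ends t) (diag_edges t - {c}))\<^sup>*\<^sup>* c y"
  shows "prefix c y"
  using assms(4)
proof (induction rule: rtranclp_induct)
  case (step y z)
  then obtain e where e: "e \<in> nodes (Sk t)" "e \<noteq> c"
    "diag_ends t e = (y, z) \<or> diag_ends t e = (z, y)"
    by (auto simp: adj_def diag_edges_def)
  show ?case
  proof (cases "is_leaf (subt (Sk t) e)")
    case True
    \<comment> \<open>A leaf below c is bound below c, since no atom is free in the subterm at c.\<close>
    have "prefix c e \<Longrightarrow> prefix c (binder_of t e)"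
      using binder_below_if_excess_zero[OF t c] e(1) True by (auto simp: prefix_def)
    then show ?thesis
      using e(3) True step.IH prefixeq_butlast
        strict_prefix_imp_prefix_butlast[OF binder_of_strict_prefix[OF t e(1) True]]
      by (auto intro: prefix_order.trans)
  next
    case False
    then show ?thesis
      using e(2,3) step.IH prefixeq_butlast strict_prefix_imp_prefix_butlast
      by (auto intro: prefix_order.trans simp: strict_prefix_def)
  qed
qed simp

theorem two_connected_iff_excess_pos_below_root:
  assumes t: "pl 0 [] t"
  shows "two_connected t \<longleftrightarrow> excess_pos_below_root (Sk t)"
proof
  assume "excess_pos_below_root (Sk t)"
  then have "(adj (diag_ends t) (diag_edges t - {e}))\<^sup>*\<^sup>* x y"
    if "x \<in> diag_vertices t" "y \<in> diag_vertices t" for e x y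
    using diag_reaches_root[OF t] that adj_rtranclp_sym by (meson rtranclp_trans)
  moreover have "diag_edges t - {[]} = diag_edges t"
    by (auto simp: diag_edges_def)
  ultimately show "two_connected t"
    unfolding two_connected_def two_edge_connected_def by metis
next
  assume 2: "two_connected t"
  show "excess_pos_below_root (Sk t)"
    unfolding excess_pos_below_root_def
  proof (intro ballI impI)
    fix c assume c: "c \<in> nodes (Sk t)" "c \<noteq> []"
    show "0 < excess (subt (Sk t) c)"
    proof (rule ccontr)
      assume "\<not> 0 < excess (subt (Sk t) c)"
      then have c0: "excess (subt (Sk t) c) = 0"
        using excess_subt_nonneg[OF t c(1)] by auto
      then have "\<not> is_leaf (subt (Sk t) c)"
        by (cases "subt (Sk t) c") auto
      then have "c \<in> diag_vertices t" "c \<in> diag_edges t"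
        using c by (auto simp: diag_vertices_def diag_edges_def)
      moreover have "Sk t \<noteq> Leaf"
        using pl_excess[OF t] by auto
      then have "[] \<in> diag_vertices t"
        by (cases "Sk t") (auto simp: diag_vertices_def)
      ultimately show False
        using 2 diag_stays_below[OF t c(1) c0, of "[]"] c(2)
        unfolding two_connected_def two_edge_connected_def by auto
    qed
  qed
qed

theorem proposition1:
  fixes S :: sk
  shows "((\<exists>t. Sk t = S \<and> planar t \<and> linear t \<and> normal t) \<longleftrightarrow>
            cond_linearity S \<and> cond_normality S \<and> cond_connectedness S)
       \<and> (\<forall>t. Sk t = S \<and> planar t \<and> linear t \<and> normal t \<longrightarrow>
            (two_connected t \<longleftrightarrow> cond_2connectedness S))"
proof (intro conjI allI impI)
  show "(\<exists>t. Sk t = S \<and> planar t \<and> linear t \<and> normal t) \<longleftrightarrow>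
          cond_linearity S \<and> cond_normality S \<and> cond_connectedness S"
    unfolding cond_linearity_def cond_normality_iff cond_connectedness_iff
    by (rule planar_linear_normal_skeleton_iff)
  fix t
  assume "Sk t = S \<and> planar t \<and> linear t \<and> normal t"
  then have S: "Sk t = S" and t: "pl 0 [] t"
    by (auto simp: planar_def)
  then have "excess S = 0"
    using pl_excess by auto
  then show "two_connected t \<longleftrightarrow> cond_2connectedness S"
    using two_connected_iff_excess_pos_below_root[OF t] S
    by (simp add: cond_2connectedness_iff excess_pos_below_root_chain_iff)
qed

end
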